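(* There is a function $f:(0,\infty)\to[0,1]$ with $\lim_{r\to\infty}r^{c}f(r)=0$ for every $c>0$ such that the following holds. For every common knowledge distinguishing debate game $(A,S,P,C_w,C_l)$ and all positive integers $m,n$ with $|C_l(s)|\le n$ and $|C_w(s)|\ge m$ for all $s\in S$, there is a policy whose error is at most $f(m/n)$.
   Context: Let $\delta$ be a special default action. A CKDDG is a tuple $(A,S,P,C_w,C_l)$ with $A$ finite, $\delta\notin A$, $S$ finite, $P$ a probability mass function on $S$, and $C_w,C_l:S\to\mathcal P(A)$. A policy is $M:\{1,2\}\times(A\cup\{\delta\})^2\to[0,1]$ with $M(1,a_1,a_2)+M(2,a_1,a_2)=1$. For $j\in\{1,2\}$ and $s\in S$, $w^i_M((j,s))$ is the value to agent $i$ of the zero-sum game with payoff matrix $M(i,\cdot,\cdot)$ in which agent $j$ chooses from $C_w(s)\cup\{\delta\}$ and the other agent chooses from $C_l(s)\cup\{\delta\}$. The error is $\mathbb E_{s\sim P}\left[\frac{w^1_M((2,s))+w^2_M((1,s))}{2}\right]$. *)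

theory Defs
  imports "HOL-Probability.Probability"
begin

text \<open>Actions are of type 'a option; the default action delta is None, and an
  action a of A is represented as Some a (so delta is automatically not in A).\<close>

definition delta :: "'a option" where "delta = None"

definition mixed :: "'b set \<Rightarrow> ('b \<Rightarrow> real) set" where
  "mixed X = {x. (\<forall>b. 0 \<le> x b) \<and> (\<forall>b. b \<notin> X \<longrightarrow> x b = 0) \<and> sum x X = 1}"

definition game_value :: "'b set \<Rightarrow> 'c set \<Rightarrow> ('b \<Rightarrow> 'c \<Rightarrow> real) \<Rightarrow> real" where
  "game_value X Y g =
     (SUP x\<in>mixed X. INF y\<in>mixed Y. \<Sum>a\<in>X. \<Sum>b\<in>Y. x a * y b * g a b)"

definition is_policy :: "(nat \<Rightarrow> 'a option \<Rightarrow> 'a option \<Rightarrow> real) \<Rightarrow> bool" where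
  "is_policy M \<longleftrightarrow> (\<forall>i\<in>{1,2}. \<forall>a1 a2. 0 \<le> M i a1 a2 \<and> M i a1 a2 \<le> 1) \<and>
                    (\<forall>a1 a2. M 1 a1 a2 + M 2 a1 a2 = 1)"

text \<open>w^i_M((j,s)): agent j chooses from C_w(s) \<union> {delta}, the other agent from
  C_l(s) \<union> {delta}; value to agent i of the zero-sum game with payoff M(i,.,.).\<close>
definition wval :: "(nat \<Rightarrow> 'a option \<Rightarrow> 'a option \<Rightarrow> real) \<Rightarrow> ('s \<Rightarrow> 'a set) \<Rightarrow>
    ('s \<Rightarrow> 'a set) \<Rightarrow> nat \<Rightarrow> nat \<Rightarrow> 's \<Rightarrow> real" where
  "wval M Cw Cl i j s =
    (let W = Some ` Cw s \<union> {delta}; L = Some ` Cl s \<union> {delta};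
         Xi = (if i = j then W else L); Yo = (if i = j then L else W);
         g = (if i = 1 then (\<lambda>a b. M 1 a b) else (\<lambda>a b. M 2 b a))
     in game_value Xi Yo g)"

definition ckddg_error :: "(nat \<Rightarrow> 'a option \<Rightarrow> 'a option \<Rightarrow> real) \<Rightarrow> 's pmf \<Rightarrow>
    ('s \<Rightarrow> 'a set) \<Rightarrow> ('s \<Rightarrow> 'a set) \<Rightarrow> real" where
  "ckddg_error M P Cw Cl =
     measure_pmf.expectation P (\<lambda>s. (wval M Cw Cl 1 2 s + wval M Cw Cl 2 1 s) / 2)"

definition is_ckddg :: "'a set \<Rightarrow> 's set \<Rightarrow> 's pmf \<Rightarrow> ('s \<Rightarrow> 'a set) \<Rightarrow> ('s \<Rightarrow> 'a set) \<Rightarrow> bool" where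
  "is_ckddg A S P Cw Cl \<longleftrightarrow> finite A \<and> finite S \<and> set_pmf P \<subseteq> S \<and>
     (\<forall>s\<in>S. Cw s \<subseteq> A \<and> Cl s \<subseteq> A)"

end

theory Submission
  imports Defs "HOL-Real_Asymp.Real_Asymp"
begin

text \<open>
  The judge labels every action independently: with probability p = t/n it gets a label drawn
  uniformly from a finite set of d labels, otherwise none. An action wins against another if it is
  labelled and its label beats the other's (a labelled action beats an unlabelled one). A label is a
  name below J^2 together with fewer than J blacklisted names, and u beats v unless v blacklists
  the name of u. So any set T of fewer than J labels is dominated (beaten, and not beaten back)
  by the label whose blacklist consists of the names of T and whose name is blacklisted by no
  element of T: fewer than J^2 names are blacklisted by T.

  The honest agent wins, whichever role it plays, as soon as one of its at least m - n actions not
  available to the liar carries a label dominating all labels of the liar's at most n actions.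
  This fails only if J of the liar's actions are labelled (probability at most (n p)^J = t^J),
  or if for one of the at most 2^d label sets T with fewer than J elements no honest-only action
  gets a label dominating T (probability at most (1 - p/d)^(m - n)). Averaging over the random
  labelling yields a fixed labelling with error at most t^J + 2^d exp (- t (r - 1) / d), where
  r = m/n; with t = 1 / sqrt r and J large this decays faster than any power of r.
\<close>

type_synonym label = "nat \<times> nat list"

definition labels :: "nat \<Rightarrow> label set" where
  "labels J = {(i, xs). i < J * J \<and> set xs \<subseteq> {..<J * J} \<and> length xs < J}"

definition beats :: "label \<Rightarrow> label \<Rightarrow> bool" where
  "beats u v \<longleftrightarrow> fst u \<notin> set (snd v)"

definition dominates :: "label \<Rightarrow> label set \<Rightarrow> bool" where
  "dominates z T \<longleftrightarrow> (\<forall>t\<in>T. beats z t \<and> \<not> beats t z)"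

lemma finite_labels: "finite (labels J)"
proof (rule finite_subset)
  show "labels J \<subseteq> {..<J * J} \<times> {xs. set xs \<subseteq> {..<J * J} \<and> length xs \<le> J}"
    unfolding labels_def by auto
qed (intro finite_cartesian_product finite_lists_length_le; simp)

lemma card_labels_pos:
  assumes "1 \<le> J" shows "0 < card (labels J)"
proof -
  have "(0, []) \<in> labels J" using assms by (simp add: labels_def)
  then show ?thesis using finite_labels card_gt_0_iff by blast
qed

lemma exists_dominating_label:
  assumes T: "T \<subseteq> labels J" "card T < J"
  shows "\<exists>z\<in>labels J. dominates z T"
proof -
  have fin: "finite T" using finite_subset[OF T(1) finite_labels] .
  let ?U = "\<Union>t\<in>T. set (snd t)"
  have "card ?U \<le> (\<Sum>t\<in>T. card (set (snd t)))" by (rule card_UN_le[OF fin])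
  also have "\<dots> \<le> (\<Sum>t\<in>T. J - 1)"
  proof (intro sum_mono)
    fix t assume "t \<in> T"
    then have "length (snd t) < J" using T(1) unfolding labels_def by auto
    then show "card (set (snd t)) \<le> J - 1" using card_length[of "snd t"] by linarith
  qed
  also have "\<dots> = card T * (J - 1)" by simp
  also have "\<dots> \<le> card T * J" by simp
  also have "\<dots> < J * J" using T(2) by simp
  finally have "card ?U < card {..<J * J}" by simp
  moreover have "finite ?U" using fin by simp
  ultimately have "\<not> {..<J * J} \<subseteq> ?U" using card_mono not_le by metis
  then obtain i where i: "i < J * J" "i \<notin> ?U" by blast
  obtain xs where xs: "set xs = fst ` T" "distinct xs"
    using finite_distinct_list[of "fst ` T"] fin by blast
  have "length xs = card (fst ` T)" using distinct_card[OF xs(2)] xs(1) by simp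
  also have "\<dots> \<le> card T" by (rule card_image_le[OF fin])
  finally have "length xs < J" using T(2) by simp
  moreover have "fst ` T \<subseteq> {..<J * J}" using T(1) by (auto simp: labels_def)
  ultimately have "(i, xs) \<in> labels J" using i(1) xs(1) by (simp add: labels_def)
  moreover have "dominates (i, xs) T" using i(2) xs(1) unfolding dominates_def beats_def by auto
  ultimately show ?thesis by blast
qed

lemma game_value_le_pure_strategy:
  assumes X: "finite X" "X \<noteq> {}" and Y: "finite Y" "y \<in> Y"
    and nonneg: "\<And>a b. a \<in> X \<Longrightarrow> b \<in> Y \<Longrightarrow> 0 \<le> g a b"
    and response: "\<And>a. a \<in> X \<Longrightarrow> g a y \<le> e"
  shows "game_value X Y g \<le> e"
  unfolding game_value_def
proof (rule cSUP_least)
  obtain a where "a \<in> X" using X(2) by blast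
  then have "(\<lambda>b. of_bool (b = a)) \<in> mixed X" using X(1) by (auto simp: mixed_def)
  then show "mixed X \<noteq> {}" by blast
next
  fix x assume x: "x \<in> mixed X"
  let ?y = "\<lambda>b. of_bool (b = y) :: real"
  have "(INF y\<in>mixed Y. \<Sum>a\<in>X. \<Sum>b\<in>Y. x a * y b * g a b) \<le> (\<Sum>a\<in>X. \<Sum>b\<in>Y. x a * ?y b * g a b)"
  proof (rule cINF_lower)
    show "?y \<in> mixed Y" using Y by (auto simp: mixed_def)
    show "bdd_below ((\<lambda>y. \<Sum>a\<in>X. \<Sum>b\<in>Y. x a * y b * g a b) ` mixed Y)"
      using x nonneg by (intro bdd_belowI[of _ 0]) (auto simp: mixed_def intro!: sum_nonneg)
  qed
  also have "\<dots> = (\<Sum>a\<in>X. x a * g a y)"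
    using Y by (simp add: of_bool_def if_distrib if_distribR cong: if_cong)
  also have "\<dots> \<le> (\<Sum>a\<in>X. x a * e)"
    using x by (intro sum_mono mult_left_mono response) (auto simp: mixed_def)
  also have "\<dots> = e"
    using x by (simp add: mixed_def flip: sum_distrib_right)
  finally show "(INF y\<in>mixed Y. \<Sum>a\<in>X. \<Sum>b\<in>Y. x a * y b * g a b) \<le> e" .
qed

definition label_wins :: "label option \<Rightarrow> label option \<Rightarrow> bool" where
  "label_wins a b \<longleftrightarrow> (\<exists>u. a = Some u \<and> (\<forall>v. b = Some v \<longrightarrow> beats u v))"

definition labelling_policy :: "('a \<Rightarrow> label option) \<Rightarrow> nat \<Rightarrow> 'a option \<Rightarrow> 'a option \<Rightarrow> real" where
  "labelling_policy l i a1 a2 =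
     (let w = label_wins (Option.bind a1 l) (Option.bind a2 l) in if i = 1 then of_bool w else of_bool (\<not> w))"

lemma is_policy_labelling_policy: "is_policy (labelling_policy l)"
  unfolding is_policy_def labelling_policy_def by (auto simp: Let_def)

definition has_dominating_action :: "('a \<Rightarrow> label option) \<Rightarrow> 'a set \<Rightarrow> 'a set \<Rightarrow> bool" where
  "has_dominating_action l W L \<longleftrightarrow> (\<exists>a\<in>W - L. \<exists>z. l a = Some z \<and> dominates z {t. Some t \<in> l ` L})"

lemma dominating_label_wins:
  assumes "dominates z {t. Some t \<in> l ` L}" "b \<in> Some ` L \<union> {delta}"
  shows "label_wins (Some z) (Option.bind b l) \<and> \<not> label_wins (Option.bind b l) (Some z)"
proof (cases "Option.bind b l")
  case (Some t)
  then have "t \<in> {t. Some t \<in> l ` L}" using assms(2) by (force simp: delta_def)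
  with assms(1) have "beats z t \<and> \<not> beats t z" unfolding dominates_def by blast
  then show ?thesis using Some by (simp add: label_wins_def)
qed (simp add: label_wins_def)

lemma wval_labelling_policy_le:
  fixes l :: "'a \<Rightarrow> label option"
  assumes fin: "finite (Cw s)" "finite (Cl s)"
  defines "fail \<equiv> of_bool (\<not> has_dominating_action l (Cw s) (Cl s))"
  shows "wval (labelling_policy l) Cw Cl 1 2 s \<le> fail"
    and "wval (labelling_policy l) Cw Cl 2 1 s \<le> fail"
proof -
  let ?M = "labelling_policy l"
  let ?L = "Some ` Cl s \<union> {delta}" and ?W = "Some ` Cw s \<union> {delta}"
  have wval: "wval ?M Cw Cl 1 2 s = game_value ?L ?W (\<lambda>a b. ?M 1 a b)"
             "wval ?M Cw Cl 2 1 s = game_value ?L ?W (\<lambda>a b. ?M 2 b a)"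
    by (simp_all add: wval_def Let_def)
  have L: "finite ?L" "?L \<noteq> {}" and W: "finite ?W" "delta \<in> ?W" using fin by auto
  have payoff: "0 \<le> ?M i a b" "?M i a b \<le> 1" for i a b
    by (simp_all add: labelling_policy_def Let_def)
  have "wval ?M Cw Cl 1 2 s \<le> fail \<and> wval ?M Cw Cl 2 1 s \<le> fail"
  proof (cases "has_dominating_action l (Cw s) (Cl s)")
    case True
    then obtain a z where a: "a \<in> Cw s" "l a = Some z" "dominates z {t. Some t \<in> l ` Cl s}"
      unfolding has_dominating_action_def by blast
    have response: "?M 1 b (Some a) \<le> 0" "?M 2 (Some a) b \<le> 0" if "b \<in> ?L" for b
      using dominating_label_wins[OF a(3) that] a(2) by (simp_all add: labelling_policy_def Let_def)
    have "Some a \<in> ?W" using a(1) by blast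
    note value_le = game_value_le_pure_strategy[OF L W(1) this]
    have "game_value ?L ?W (\<lambda>a b. ?M 1 a b) \<le> 0" "game_value ?L ?W (\<lambda>a b. ?M 2 b a) \<le> 0"
      by (rule value_le; use payoff response in blast)+
    then show ?thesis unfolding wval fail_def using True by simp
  next
    case False
    note value_le = game_value_le_pure_strategy[OF L W]
    have "game_value ?L ?W (\<lambda>a b. ?M 1 a b) \<le> 1" "game_value ?L ?W (\<lambda>a b. ?M 2 b a) \<le> 1"
      by (rule value_le; use payoff in blast)+
    then show ?thesis unfolding wval fail_def using False by simp
  qed
  then show "wval ?M Cw Cl 1 2 s \<le> fail" "wval ?M Cw Cl 2 1 s \<le> fail" by simp_all
qed

definition label_pmf :: "real \<Rightarrow> 'b set \<Rightarrow> 'b option pmf" where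
  "label_pmf p D = map_pmf (\<lambda>(b, z). if b then Some z else None) (pair_pmf (bernoulli_pmf p) (pmf_of_set D))"

lemma set_label_pmf_subset:
  assumes "finite D" "D \<noteq> {}"
  shows "set_pmf (label_pmf p D) \<subseteq> insert None (Some ` D)"
  using assms by (auto simp: label_pmf_def split: if_splits)

lemma finite_set_label_pmf:
  assumes "finite D" "D \<noteq> {}" shows "finite (set_pmf (label_pmf p D))"
  using set_label_pmf_subset[OF assms] by (rule finite_subset) (simp add: assms(1))

lemma set_Pi_label_pmf:
  assumes "finite A" "finite D" "D \<noteq> {}" "l \<in> set_pmf (Pi_pmf A None (\<lambda>_. label_pmf p D))"
  shows "l x \<in> insert None (Some ` D)"
proof (cases "x \<in> A")
  case True
  then have "l x \<in> set_pmf (label_pmf p D)" using assms(1,4) by (auto simp: set_Pi_pmf PiE_dflt_def)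
  then show ?thesis using set_label_pmf_subset[OF assms(2,3)] by blast
qed (use assms(1,4) in \<open>auto simp: set_Pi_pmf PiE_dflt_def\<close>)

lemma measure_label_pmf_Some:
  fixes D :: "'b::countable set"
  assumes "finite D" "D \<noteq> {}" "0 \<le> p" "p \<le> 1"
  shows "measure_pmf.prob (label_pmf p D) (Some ` G) = p * (card (D \<inter> G) / card D)"
proof -
  have "(\<lambda>(b, z). if b then Some z else None) -` Some ` G = {True} \<times> G"
    by (auto split: if_splits)
  then have "measure_pmf.prob (label_pmf p D) (Some ` G) =
      measure_pmf.prob (pair_pmf (bernoulli_pmf p) (pmf_of_set D)) ({True} \<times> G)"
    by (simp add: label_pmf_def)
  also have "\<dots> = measure_pmf.prob (bernoulli_pmf p) {True} * measure_pmf.prob (pmf_of_set D) G"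
    by (rule measure_pmf_prob_product) auto
  also have "\<dots> = p * (card (D \<inter> G) / card D)"
    using assms by (simp add: measure_pmf_single measure_pmf_of_set)
  finally show ?thesis .
qed

lemma measure_Pi_pmf_all_in:
  assumes "finite A" "S \<subseteq> A"
  shows "measure_pmf.prob (Pi_pmf A dflt (\<lambda>_. Q)) {f. \<forall>x\<in>S. f x \<in> E} = measure_pmf.prob Q E ^ card S"
proof -
  have "{f. \<forall>x\<in>S. f x \<in> E} = Pi A (\<lambda>x. if x \<in> S then E else UNIV)"
    using assms(2) by (auto simp: Pi_def)
  then have "measure_pmf.prob (Pi_pmf A dflt (\<lambda>_. Q)) {f. \<forall>x\<in>S. f x \<in> E} =
      (\<Prod>x\<in>A. if x \<in> S then measure_pmf.prob Q E else 1)"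
    using assms(1) by (simp add: measure_Pi_pmf_Pi if_distrib cong: if_cong)
  also have "\<dots> = measure_pmf.prob Q E ^ card S"
    using assms by (simp add: prod.If_cases Int_absorb1)
  finally show ?thesis .
qed

lemma measure_Pi_pmf_many_in_le:
  assumes "finite A" "L \<subseteq> A"
  shows "measure_pmf.prob (Pi_pmf A dflt (\<lambda>_. Q)) {f. k \<le> card {x\<in>L. f x \<in> E}}
           \<le> (card L * measure_pmf.prob Q E) ^ k"
proof -
  let ?PP = "Pi_pmf A dflt (\<lambda>_. Q)" and ?q = "measure_pmf.prob Q E"
  define SS where "SS = {S. S \<subseteq> L \<and> card S = k}"
  have fin: "finite L" using finite_subset[OF assms(2,1)] .
  have "finite SS" unfolding SS_def by (rule finite_subset[of _ "Pow L"]) (use fin in auto)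
  have "{f. k \<le> card {x\<in>L. f x \<in> E}} \<subseteq> (\<Union>S\<in>SS. {f. \<forall>x\<in>S. f x \<in> E})"
  proof
    fix f assume "f \<in> {f. k \<le> card {x\<in>L. f x \<in> E}}"
    then obtain S where "S \<subseteq> {x\<in>L. f x \<in> E}" "card S = k"
      by (auto intro: obtain_subset_with_card_n)
    then show "f \<in> (\<Union>S\<in>SS. {f. \<forall>x\<in>S. f x \<in> E})" unfolding SS_def by auto
  qed
  then have "measure_pmf.prob ?PP {f. k \<le> card {x\<in>L. f x \<in> E}}
      \<le> measure_pmf.prob ?PP (\<Union>S\<in>SS. {f. \<forall>x\<in>S. f x \<in> E})"
    by (rule measure_pmf.finite_measure_mono) simp
  also have "\<dots> \<le> (\<Sum>S\<in>SS. measure_pmf.prob ?PP {f. \<forall>x\<in>S. f x \<in> E})"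
    by (rule measure_pmf.finite_measure_subadditive_finite) (auto simp: \<open>finite SS\<close>)
  also have "\<dots> = (\<Sum>S\<in>SS. ?q ^ k)"
  proof (intro sum.cong refl)
    fix S assume "S \<in> SS"
    then have "S \<subseteq> A" "card S = k" using assms(2) unfolding SS_def by auto
    then show "measure_pmf.prob ?PP {f. \<forall>x\<in>S. f x \<in> E} = ?q ^ k"
      by (simp add: measure_Pi_pmf_all_in[OF assms(1)])
  qed
  also have "\<dots> = card SS * ?q ^ k" by simp
  also have "\<dots> \<le> card L ^ k * ?q ^ k"
  proof (rule mult_right_mono)
    have "card SS = card L choose k" unfolding SS_def by (rule n_subsets[OF fin(1)])
    also have "\<dots> \<le> card L ^ k" by (cases "k \<le> card L") (simp_all add: binomial_le_pow binomial_eq_0)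
    finally show "real (card SS) \<le> card L ^ k" by (simp flip: of_nat_power)
  qed simp
  finally show ?thesis by (simp add: power_mult_distrib)
qed

lemma no_dominating_action_cases:
  assumes "\<not> has_dominating_action l W L" "finite L" "l ` L \<subseteq> insert None (Some ` labels J)"
  obtains "J \<le> card {x\<in>L. l x \<in> range Some}"
    | T where "T \<subseteq> labels J" "card T < J" "\<forall>a\<in>W - L. l a \<notin> Some ` {z. dominates z T}"
proof (cases "J \<le> card {x\<in>L. l x \<in> range Some}")
  case False
  let ?T = "{t. Some t \<in> l ` L}"
  have "?T \<subseteq> (\<lambda>x. the (l x)) ` {x\<in>L. l x \<in> range Some}"
  proof
    fix t assume "t \<in> ?T"
    then obtain x where "x \<in> L" "l x = Some t" by auto
    then show "t \<in> (\<lambda>x. the (l x)) ` {x\<in>L. l x \<in> range Some}" by (intro image_eqI[of _ _ x]) auto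
  qed
  then have "card ?T \<le> card ((\<lambda>x. the (l x)) ` {x\<in>L. l x \<in> range Some})"
    using assms(2) by (intro card_mono) auto
  also have "\<dots> \<le> card {x\<in>L. l x \<in> range Some}"
    using assms(2) by (intro card_image_le) auto
  finally have "card ?T < J" using False by linarith
  moreover have "\<forall>a\<in>W - L. l a \<notin> Some ` {z. dominates z ?T}"
    using assms(1) unfolding has_dominating_action_def by auto
  moreover have "?T \<subseteq> labels J" using assms(3) by auto
  ultimately show ?thesis using that(2) by blast
qed (rule that(1))

lemma measure_avoid_dominating_labels_le:
  assumes "finite A" "K \<subseteq> A" "0 \<le> p" "p \<le> 1" "T \<subseteq> labels J" "card T < J"
  shows "measure_pmf.prob (Pi_pmf A None (\<lambda>_. label_pmf p (labels J)))
           {l. \<forall>a\<in>K. l a \<in> - Some ` {z. dominates z T}} \<le> (1 - p / card (labels J)) ^ card K"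
proof -
  let ?Q = "label_pmf p (labels J)" and ?G = "{z. dominates z T}" and ?d = "card (labels J)"
  have D: "finite (labels J)" "labels J \<noteq> {}"
    using finite_labels card_labels_pos[of J] assms(6) by fastforce+
  obtain z where "z \<in> labels J \<inter> ?G" using exists_dominating_label[OF assms(5,6)] by blast
  then have "1 \<le> card (labels J \<inter> ?G)" using D(1) by (metis One_nat_def Suc_leI card_gt_0_iff empty_iff finite_Int)
  then have "p * 1 \<le> p * card (labels J \<inter> ?G)" using assms(3) by (intro mult_left_mono) auto
  then have "p / ?d \<le> p * (card (labels J \<inter> ?G) / ?d)" by (simp add: divide_right_mono)
  also have "\<dots> = measure_pmf.prob ?Q (Some ` ?G)"
    by (rule measure_label_pmf_Some[OF D assms(3,4), symmetric])
  finally have "measure_pmf.prob ?Q (- Some ` ?G) \<le> 1 - p / ?d"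
    using measure_pmf.prob_compl[of "Some ` ?G" ?Q] by (simp add: Compl_eq_Diff_UNIV)
  then show ?thesis
    unfolding measure_Pi_pmf_all_in[OF assms(1,2)] by (intro power_mono) auto
qed

lemma no_dominating_action_in_support:
  assumes "finite A" "L \<subseteq> A" "1 \<le> J"
  shows "{l. \<not> has_dominating_action l W L} \<inter> set_pmf (Pi_pmf A None (\<lambda>_. label_pmf p (labels J)))
           \<subseteq> {l. J \<le> card {x\<in>L. l x \<in> range Some}} \<union>
             (\<Union>T\<in>{T. T \<subseteq> labels J \<and> card T < J}. {l. \<forall>a\<in>W - L. l a \<in> - Some ` {z. dominates z T}})"
proof
  fix l assume l: "l \<in> {l. \<not> has_dominating_action l W L} \<inter> set_pmf (Pi_pmf A None (\<lambda>_. label_pmf p (labels J)))"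
  have D: "finite (labels J)" "labels J \<noteq> {}" using finite_labels card_labels_pos[OF assms(3)] by fastforce+
  have l': "\<not> has_dominating_action l W L" "l \<in> set_pmf (Pi_pmf A None (\<lambda>_. label_pmf p (labels J)))"
    using l by simp_all
  have "l ` L \<subseteq> insert None (Some ` labels J)"
    using set_Pi_label_pmf[OF assms(1) D l'(2)] by (simp add: image_subset_iff)
  with l'(1) finite_subset[OF assms(2,1)]
  show "l \<in> {l. J \<le> card {x\<in>L. l x \<in> range Some}} \<union>
      (\<Union>T\<in>{T. T \<subseteq> labels J \<and> card T < J}. {l. \<forall>a\<in>W - L. l a \<in> - Some ` {z. dominates z T}})"
    by (cases rule: no_dominating_action_cases) blast+
qed

lemma measure_no_dominating_action_le:
  fixes p :: real
  assumes A: "finite A" "W \<subseteq> A" "L \<subseteq> A" and p: "0 \<le> p" "p \<le> 1" and J: "1 \<le> J"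
  defines "d \<equiv> card (labels J)"
  shows "measure_pmf.prob (Pi_pmf A None (\<lambda>_. label_pmf p (labels J))) {l. \<not> has_dominating_action l W L}
           \<le> (card L * p) ^ J + 2 ^ d * (1 - p / d) ^ card (W - L)"
proof -
  let ?Q = "label_pmf p (labels J)"
  let ?PP = "Pi_pmf A None (\<lambda>_. ?Q)"
  let ?many = "{l. J \<le> card {x\<in>L. l x \<in> range Some}}"
  let ?avoid = "\<lambda>T. {l. \<forall>a\<in>W - L. l a \<in> - Some ` {z. dominates z T}}"
  let ?TT = "{T. T \<subseteq> labels J \<and> card T < J}"
  have D: "finite (labels J)" "labels J \<noteq> {}" using finite_labels card_labels_pos[OF J] by fastforce+
  have TT: "finite ?TT" "card ?TT \<le> 2 ^ d"
    using card_mono[of "Pow (labels J)" ?TT] D(1) by (auto simp: d_def card_Pow)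
  have "measure_pmf.prob ?PP {l. \<not> has_dominating_action l W L} \<le> measure_pmf.prob ?PP (?many \<union> (\<Union>T\<in>?TT. ?avoid T))"
    using no_dominating_action_in_support[OF A(1,3) J, of W p]
    by (subst measure_Int_set_pmf[symmetric]) (rule measure_pmf.finite_measure_mono; simp)
  also have "\<dots> \<le> measure_pmf.prob ?PP ?many + measure_pmf.prob ?PP (\<Union>T\<in>?TT. ?avoid T)"
    by (rule measure_subadditive) (simp_all add: measure_pmf.emeasure_eq_measure)
  also have "\<dots> \<le> measure_pmf.prob ?PP ?many + (\<Sum>T\<in>?TT. measure_pmf.prob ?PP (?avoid T))"
    by (intro add_left_mono measure_pmf.finite_measure_subadditive_finite) (simp_all add: TT(1))
  also have "\<dots> \<le> (card L * p) ^ J + (\<Sum>T\<in>?TT. (1 - p / d) ^ card (W - L))"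
  proof (intro add_mono sum_mono)
    have "measure_pmf.prob ?Q (range Some) = p"
      using measure_label_pmf_Some[OF D p, of UNIV] card_labels_pos[OF J] by simp
    then show "measure_pmf.prob ?PP ?many \<le> (card L * p) ^ J"
      using measure_Pi_pmf_many_in_le[OF A(1,3), of None ?Q J "range Some"] by simp
    show "measure_pmf.prob ?PP (?avoid T) \<le> (1 - p / d) ^ card (W - L)" if "T \<in> ?TT" for T
      using that unfolding d_def by (intro measure_avoid_dominating_labels_le[OF A(1) _ p]) (use A in auto)
  qed
  also have "\<dots> \<le> (card L * p) ^ J + 2 ^ d * (1 - p / d) ^ card (W - L)"
  proof -
    have "p / d \<le> 1" using p card_labels_pos[OF J] unfolding d_def by (simp add: divide_le_eq_1)
    then show ?thesis using TT(2) by (simp add: mult_right_mono flip: of_nat_power)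
  qed
  finally show ?thesis .
qed

lemma exists_set_pmf_measure_le:
  fixes b :: real
  assumes fin: "finite (set_pmf Q)" "finite (set_pmf P)"
    and le: "\<And>s. s \<in> set_pmf P \<Longrightarrow> measure_pmf.prob Q {x. F x s} \<le> b"
  shows "\<exists>x\<in>set_pmf Q. measure_pmf.prob P {s. F x s} \<le> b"
proof (rule ccontr)
  have sum: "measure_pmf.prob P {s. F x s} = (\<Sum>s\<in>set_pmf P. pmf P s * indicator {x. F x s} x)" for x
  proof -
    have "measure_pmf.prob P {s. F x s} = measure_pmf.prob P ({s. F x s} \<inter> set_pmf P)"
      by (rule measure_Int_set_pmf[symmetric])
    also have "\<dots> = (\<Sum>s\<in>set_pmf P. if F x s then pmf P s else 0)"
      using fin(2) by (simp add: measure_measure_pmf_finite Int_commute sum.inter_restrict)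
    also have "\<dots> = (\<Sum>s\<in>set_pmf P. pmf P s * indicator {x. F x s} x)"
      by (intro sum.cong) (simp_all add: indicator_def)
    finally show ?thesis .
  qed
  assume "\<not> ?thesis"
  then have "b < measure_pmf.expectation Q (\<lambda>x. measure_pmf.prob P {s. F x s})"
    by (intro measure_pmf.expectation_greater integrable_measure_pmf_finite fin)
       (auto simp: AE_measure_pmf_iff not_le)
  also have "\<dots> = (\<Sum>s\<in>set_pmf P. pmf P s * measure_pmf.expectation Q (indicator {x. F x s}))"
    unfolding sum
    by (subst Bochner_Integration.integral_sum)
       (simp_all only: integrable_measure_pmf_finite[OF fin(1)] integral_mult_right_zero)
  also have "\<dots> = (\<Sum>s\<in>set_pmf P. pmf P s * measure_pmf.prob Q {x. F x s})"
    by simp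
  also have "\<dots> \<le> (\<Sum>s\<in>set_pmf P. pmf P s * b)"
    by (intro sum_mono mult_left_mono le) auto
  also have "\<dots> = b"
    using sum_pmf_eq_1[OF fin(2) order.refl] by (simp flip: sum_distrib_right)
  finally show False by simp
qed

lemma ckddg_error_labelling_policy_le:
  assumes "is_ckddg A S P Cw Cl"
  shows "ckddg_error (labelling_policy l) P Cw Cl
           \<le> measure_pmf.prob P {s. \<not> has_dominating_action l (Cw s) (Cl s)}"
proof -
  have A: "finite A" and S: "finite S" "set_pmf P \<subseteq> S" and C: "\<And>s. s \<in> S \<Longrightarrow> Cw s \<subseteq> A \<and> Cl s \<subseteq> A"
    using assms unfolding is_ckddg_def by auto
  have fin: "finite (set_pmf P)" using finite_subset[OF S(2,1)] .
  have fin_C: "finite (Cw s) \<and> finite (Cl s)" if "s \<in> set_pmf P" for s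
    using C[of s] S(2) that finite_subset[OF _ A] by blast
  have "ckddg_error (labelling_policy l) P Cw Cl
      \<le> measure_pmf.expectation P (indicator {s. \<not> has_dominating_action l (Cw s) (Cl s)})"
    unfolding ckddg_error_def
  proof (intro integral_mono_AE integrable_measure_pmf_finite fin, unfold AE_measure_pmf_iff, intro ballI)
    fix s assume "s \<in> set_pmf P"
    with fin_C wval_labelling_policy_le[of Cw s Cl l]
    show "(wval (labelling_policy l) Cw Cl 1 2 s + wval (labelling_policy l) Cw Cl 2 1 s) / 2
        \<le> indicator {s. \<not> has_dominating_action l (Cw s) (Cl s)} s"
      by (simp add: indicator_def)
  qed
  then show ?thesis by simp
qed

lemma one_minus_power_le_exp:
  fixes x y :: real
  assumes "0 \<le> x" "x \<le> 1" "y \<le> k"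
  shows "(1 - x) ^ k \<le> exp (- x * y)"
proof -
  have "(1 - x) ^ k \<le> exp (- x) ^ k"
    using assms(2) exp_ge_add_one_self[of "- x"] by (intro power_mono) auto
  also have "\<dots> = exp (- x * k)" by (simp add: exp_of_nat_mult[symmetric] mult.commute)
  also have "\<dots> \<le> exp (- x * y)" using mult_left_mono[OF assms(3,1)] by simp
  finally show ?thesis .
qed

definition error_bound :: "nat \<Rightarrow> real \<Rightarrow> real \<Rightarrow> real" where
  "error_bound J t r = t ^ J + 2 ^ card (labels J) * exp (- t * (r - 1) / card (labels J))"

lemma measure_no_dominating_action_le_error_bound:
  fixes t :: real
  assumes A: "finite A" "W \<subseteq> A" "L \<subseteq> A" and card: "card L \<le> n" "m \<le> card W"
    and n: "0 < n" and t: "0 \<le> t" "t \<le> 1" and J: "1 \<le> J"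
  shows "measure_pmf.prob (Pi_pmf A None (\<lambda>_. label_pmf (t / n) (labels J)))
           {l. \<not> has_dominating_action l W L} \<le> error_bound J t (m / n)"
proof -
  define p where "p = t / n"
  define d where "d = card (labels J)"
  have p: "0 \<le> p" "p \<le> 1" using t n unfolding p_def by (simp_all add: field_simps)
  have d: "1 \<le> d" using card_labels_pos[OF J] unfolding d_def by linarith
  have "finite (W - L \<union> L)" using finite_subset[OF A(2,1)] finite_subset[OF A(3,1)] by simp
  then have "card W \<le> card (W - L \<union> L)" by (rule card_mono) blast
  also have "\<dots> \<le> card (W - L) + card L" by (rule card_Un_le)
  finally have k: "real m - real n \<le> card (W - L)" using card by linarith
  have "measure_pmf.prob (Pi_pmf A None (\<lambda>_. label_pmf p (labels J))) {l. \<not> has_dominating_action l W L}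
      \<le> (card L * p) ^ J + 2 ^ d * (1 - p / d) ^ card (W - L)"
    unfolding d_def by (rule measure_no_dominating_action_le[OF A p J])
  also have "\<dots> \<le> t ^ J + 2 ^ d * exp (- (p / d) * (real m - real n))"
  proof (rule add_mono)
    have "card L * p \<le> n * p" using card(1) p(1) by (intro mult_right_mono) auto
    then have "card L * p \<le> t" using n unfolding p_def by simp
    then show "(card L * p) ^ J \<le> t ^ J" using p(1) by (intro power_mono) auto
    have "p / d \<le> 1" using p d by (simp add: divide_le_eq_1)
    then have "(1 - p / d) ^ card (W - L) \<le> exp (- (p / d) * (real m - real n))"
      using p(1) d k by (intro one_minus_power_le_exp) auto
    then show "2 ^ d * (1 - p / d) ^ card (W - L) \<le> 2 ^ d * exp (- (p / d) * (real m - real n))"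
      by simp
  qed
  also have "m / n - 1 = (real m - real n) / n" using n by (simp add: diff_divide_distrib)
  then have "- (p / d) * (real m - real n) = - t * (m / n - 1) / d" by (simp add: p_def)
  then have "t ^ J + 2 ^ d * exp (- (p / d) * (real m - real n)) = error_bound J t (m / n)"
    unfolding error_bound_def d_def by simp
  finally show ?thesis unfolding p_def .
qed

lemma exists_labelling_policy_error_le:
  fixes t :: real
  assumes G: "is_ckddg A S P Cw Cl" and n: "0 < n"
    and bounds: "\<forall>s\<in>S. card (Cl s) \<le> n \<and> m \<le> card (Cw s)"
    and t: "0 \<le> t" "t \<le> 1" and J: "1 \<le> J"
  shows "\<exists>l. ckddg_error (labelling_policy l) P Cw Cl \<le> min 1 (error_bound J t (m / n))"
proof -
  let ?PP = "Pi_pmf A None (\<lambda>_. label_pmf (t / n) (labels J))"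
  let ?fail = "\<lambda>l. {s. \<not> has_dominating_action l (Cw s) (Cl s)}"
  have A: "finite A" and S: "finite S" "set_pmf P \<subseteq> S" and C: "\<And>s. s \<in> S \<Longrightarrow> Cw s \<subseteq> A \<and> Cl s \<subseteq> A"
    using G unfolding is_ckddg_def by auto
  have "labels J \<noteq> {}" using card_labels_pos[OF J] by auto
  then have "finite (set_pmf ?PP)"
    using A finite_labels by (auto simp: set_Pi_pmf intro!: finite_set_label_pmf)
  moreover have "measure_pmf.prob ?PP {l. \<not> has_dominating_action l (Cw s) (Cl s)} \<le> error_bound J t (m / n)"
    if "s \<in> set_pmf P" for s
    using that S C bounds by (intro measure_no_dominating_action_le_error_bound[OF A _ _ _ _ n t J]) auto
  ultimately have "\<exists>l\<in>set_pmf ?PP. measure_pmf.prob P (?fail l) \<le> error_bound J t (m / n)"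
    by (rule exists_set_pmf_measure_le[OF _ finite_subset[OF S(2,1)]])
  then obtain l where l: "measure_pmf.prob P (?fail l) \<le> error_bound J t (m / n)" by blast
  have "ckddg_error (labelling_policy l) P Cw Cl \<le> measure_pmf.prob P (?fail l)"
    by (rule ckddg_error_labelling_policy_le[OF G])
  moreover have "measure_pmf.prob P (?fail l) \<le> 1" by (rule measure_pmf.prob_le_1)
  ultimately have "ckddg_error (labelling_policy l) P Cw Cl \<le> min 1 (error_bound J t (m / n))"
    using l by linarith
  then show ?thesis by blast
qed

text \<open>Each J needs its own labelling, so J ranges over a finite set to make the minimum attained.\<close>

definition best_error_bound :: "real \<Rightarrow> real" where
  "best_error_bound r = min 1 (Min ((\<lambda>J. error_bound J (min 1 (1 / sqrt r)) r) ` {1..nat \<lceil>r\<rceil>}))"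

lemma best_error_bound_attained:
  assumes "0 < r"
  obtains J where "1 \<le> J" "best_error_bound r = min 1 (error_bound J (min 1 (1 / sqrt r)) r)"
proof -
  let ?K = "{1..nat \<lceil>r\<rceil>}" and ?f = "\<lambda>J. error_bound J (min 1 (1 / sqrt r)) r"
  have "?K \<noteq> {}" using assms by (simp add: le_nat_iff le_ceiling_iff)
  then have "Min (?f ` ?K) \<in> ?f ` ?K" by (intro Min_in) auto
  then obtain J where "J \<in> ?K" "Min (?f ` ?K) = ?f J" by blast
  then show ?thesis by (intro that[of J]) (simp_all add: best_error_bound_def)
qed

lemma best_error_bound_nonneg:
  assumes "0 < r" shows "0 \<le> best_error_bound r"
proof -
  obtain J where "best_error_bound r = min 1 (error_bound J (min 1 (1 / sqrt r)) r)"
    using best_error_bound_attained[OF assms] .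
  moreover have "0 \<le> min 1 (1 / sqrt r)" using assms by simp
  ultimately show ?thesis by (simp add: error_bound_def)
qed

lemma best_error_bound_le:
  assumes "1 \<le> J" "real J \<le> r"
  shows "best_error_bound r \<le> error_bound J (min 1 (1 / sqrt r)) r"
proof -
  have "J \<in> {1..nat \<lceil>r\<rceil>}" using assms by (simp add: le_nat_iff le_ceiling_iff)
  then have "Min ((\<lambda>J. error_bound J (min 1 (1 / sqrt r)) r) ` {1..nat \<lceil>r\<rceil>})
      \<le> error_bound J (min 1 (1 / sqrt r)) r" by (intro Min_le) auto
  then show ?thesis unfolding best_error_bound_def by linarith
qed

lemma tendsto_powr_mult_exp_neg_sqrt:
  "0 < c \<Longrightarrow> 0 < d \<Longrightarrow> ((\<lambda>r::real. r powr c * exp (- (1 / sqrt r) * (r - 1) / d)) \<longlongrightarrow> 0) at_top"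
  by real_asymp

lemma tendsto_powr_mult_best_error_bound:
  assumes c: "0 < c"
  shows "((\<lambda>r. r powr c * best_error_bound r) \<longlongrightarrow> 0) at_top"
proof -
  define J where "J = nat \<lceil>2 * c\<rceil> + 1"
  define d where "d = card (labels J)"
  have J: "1 \<le> J" "2 * c < J" unfolding J_def by linarith+
  have d: "0 < real d" using card_labels_pos[OF J(1)] unfolding d_def by simp
  define U where "U r = r powr (c - J / 2) + 2 ^ d * (r powr c * exp (- (1 / sqrt r) * (r - 1) / d))" for r :: real
  have U: "(U \<longlongrightarrow> 0) at_top"
    unfolding U_def using J(2)
    by (intro tendsto_add_zero tendsto_neg_powr filterlim_ident tendsto_mult_right_zero
        tendsto_powr_mult_exp_neg_sqrt c d) simp
  show ?thesis
  proof (rule tendsto_sandwich[OF _ _ tendsto_const U])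
    show "\<forall>\<^sub>F r in at_top. 0 \<le> r powr c * best_error_bound r"
      using eventually_gt_at_top[of 0] by eventually_elim (simp add: best_error_bound_nonneg)
    show "\<forall>\<^sub>F r in at_top. r powr c * best_error_bound r \<le> U r"
      using eventually_ge_at_top[of "max 1 (real J)"]
    proof eventually_elim
      case (elim r)
      then have r: "1 \<le> r" "real J \<le> r" by auto
      have "1 / sqrt r = r powr (- (1 / 2))" using r by (simp add: powr_minus_divide powr_half_sqrt)
      then have "(1 / sqrt r) ^ J = r powr (real J * (- (1 / 2)))" using r by (simp add: powr_power)
      then have "r powr c * (1 / sqrt r) ^ J = r powr (c - J / 2)"
        by (simp add: powr_add[symmetric] field_simps)
      moreover have "min 1 (1 / sqrt r) = 1 / sqrt r" using r by simp
      ultimately have "r powr c * error_bound J (min 1 (1 / sqrt r)) r = U r"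
        unfolding U_def error_bound_def d_def by (simp add: distrib_left)
      moreover have "r powr c * best_error_bound r \<le> r powr c * error_bound J (min 1 (1 / sqrt r)) r"
        using best_error_bound_le[OF J(1) r(2)] by (simp add: mult_left_mono)
      ultimately show ?case by simp
    qed
  qed
qed

theorem corollary5p2:
  "\<exists>f :: real \<Rightarrow> real.
     (\<forall>r>0. 0 \<le> f r \<and> f r \<le> 1) \<and>
     (\<forall>c>0. ((\<lambda>r. r powr c * f r) \<longlongrightarrow> 0) at_top) \<and>
     (\<forall>(A :: nat set) (S :: nat set) (P :: nat pmf) Cw Cl (m :: nat) (n :: nat).
        is_ckddg A S P Cw Cl \<and> 0 < m \<and> 0 < n \<and>
        (\<forall>s\<in>S. card (Cl s) \<le> n \<and> m \<le> card (Cw s)) \<longrightarrow>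
        (\<exists>M. is_policy M \<and> ckddg_error M P Cw Cl \<le> f (real m / real n)))"
proof (intro exI[of _ best_error_bound] conjI allI impI)
  fix r :: real assume "0 < r"
  then show "0 \<le> best_error_bound r" by (rule best_error_bound_nonneg)
  show "best_error_bound r \<le> 1" by (simp add: best_error_bound_def)
next
  fix c :: real assume "0 < c"
  then show "((\<lambda>r. r powr c * best_error_bound r) \<longlongrightarrow> 0) at_top"
    by (rule tendsto_powr_mult_best_error_bound)
next
  fix A S :: "nat set" and P :: "nat pmf" and Cw Cl :: "nat \<Rightarrow> nat set" and m n :: nat
  assume H: "is_ckddg A S P Cw Cl \<and> 0 < m \<and> 0 < n \<and> (\<forall>s\<in>S. card (Cl s) \<le> n \<and> m \<le> card (Cw s))"
  define r where "r = real m / real n"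
  have "0 < r" using H unfolding r_def by simp
  then obtain J where J: "1 \<le> J" "best_error_bound r = min 1 (error_bound J (min 1 (1 / sqrt r)) r)"
    by (rule best_error_bound_attained)
  obtain l where "ckddg_error (labelling_policy l) P Cw Cl \<le> min 1 (error_bound J (min 1 (1 / sqrt r)) r)"
    using exists_labelling_policy_error_le[of A S P Cw Cl n m "min 1 (1 / sqrt r)" J] H J(1)
    unfolding r_def by auto
  then show "\<exists>M. is_policy M \<and> ckddg_error M P Cw Cl \<le> best_error_bound (real m / real n)"
    using is_policy_labelling_policy J(2) unfolding r_def by auto
qed

end
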